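(* Let $P$ be a poset, let $\iota:\mathbf{JF}^+_P\to\mathbf{JF}_P$ be the inclusion, and let $M:\mathbf{JF}_P\to\mathbf{JF}^+_P$ be defined by $M(\mathcal{U})=\mathcal{U}^+$. Then $M$ is left adjoint to $\iota$.
   Context: A join-specification for $P$ is a set $\mathcal{U}\subseteq\wp(P)$ such that $\bigvee S$ exists in $P$ for every $S\in\mathcal{U}$ and $\{p\}\in\mathcal{U}$ for every $p\in P$. A $\mathcal{U}$-ideal is a down-closed $C$ with $\bigvee S\in C$ whenever $S\in\mathcal{U}$, $S\subseteq C$; $\mathcal{I}_{\mathcal{U}}$ is the complete lattice of $\mathcal{U}$-ideals; $\Gamma_{\mathcal{U}}(S)$ is the smallest $\mathcal{U}$-ideal containing $S$; $\mathcal{U}^+=\{S:\bigvee S\text{ exists and }\bigvee S\in\Gamma_{\mathcal{U}}(S)\}$; $\mathcal{U}$ is maximal if $\mathcal{U}=\mathcal{U}^+$ and frame-generating if $\mathcal{I}_{\mathcal{U}}$ is a frame. $\mathbf{JF}_P$ (resp. $\mathbf{JF}^+_P$) is the poset, viewed as a thin category, of frame-generating (resp. maximal frame-generating) join-specifications for $P$ ordered by inclusion. *)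

theory Defs
  imports Main
begin

(* The poset P is the carrier type 'a with its partial order. *)

definition is_join :: "'a::order set \<Rightarrow> 'a \<Rightarrow> bool" where
  "is_join S x \<longleftrightarrow> (\<forall>s\<in>S. s \<le> x) \<and> (\<forall>y. (\<forall>s\<in>S. s \<le> y) \<longrightarrow> x \<le> y)"

definition has_join :: "'a::order set \<Rightarrow> bool" where
  "has_join S \<longleftrightarrow> (\<exists>x. is_join S x)"

definition join :: "'a::order set \<Rightarrow> 'a" where
  "join S = (THE x. is_join S x)"

definition join_spec :: "'a::order set set \<Rightarrow> bool" where
  "join_spec U \<longleftrightarrow> (\<forall>S\<in>U. has_join S) \<and> (\<forall>p. {p} \<in> U)"

definition down_closed :: "'a::order set \<Rightarrow> bool" where
  "down_closed C \<longleftrightarrow> (\<forall>x y. x \<in> C \<longrightarrow> y \<le> x \<longrightarrow> y \<in> C)"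

definition U_ideal :: "'a::order set set \<Rightarrow> 'a set \<Rightarrow> bool" where
  "U_ideal U C \<longleftrightarrow> down_closed C \<and> (\<forall>S\<in>U. S \<subseteq> C \<longrightarrow> join S \<in> C)"

definition Gamma :: "'a::order set set \<Rightarrow> 'a set \<Rightarrow> 'a set" where
  "Gamma U S = \<Inter>{C. U_ideal U C \<and> S \<subseteq> C}"

definition plus :: "'a::order set set \<Rightarrow> 'a set set" where
  "plus U = {S. has_join S \<and> join S \<in> Gamma U S}"

definition maximal_spec :: "'a::order set set \<Rightarrow> bool" where
  "maximal_spec U \<longleftrightarrow> U = plus U"

(* The lattice I_U of U-ideals, ordered by inclusion: meets are intersections,
   the join of a family is Gamma of its union.  It is a frame iff binary meets
   distribute over arbitrary joins. *)
definition frame_generating :: "'a::order set set \<Rightarrow> bool" where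
  "frame_generating U \<longleftrightarrow>
     (\<forall>A \<CC>. U_ideal U A \<and> (\<forall>C\<in>\<CC>. U_ideal U C) \<longrightarrow>
        A \<inter> Gamma U (\<Union>\<CC>) = Gamma U (\<Union>C\<in>\<CC>. A \<inter> C))"

definition JF :: "'a::order set set set" where
  "JF = {U. join_spec U \<and> frame_generating U}"

definition JF_plus :: "'a::order set set set" where
  "JF_plus = {U. U \<in> JF \<and> maximal_spec U}"

end

theory Submission
  imports Defs
begin

(* A join-specification U and its closure U^+ have exactly the same U-ideals, hence the same
   Gamma and the same lattice of ideals; so U^+ is again frame-generating and U^+^+ = U^+.
   Together with U \<subseteq> U^+ and monotonicity, plus is a closure operator on JF whose fixed
   points form JF^+, and a closure operator is left adjoint to the inclusion of its fixed points. *)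

lemma Gamma_least:
  assumes "U_ideal U C" and "S \<subseteq> C"
  shows "Gamma U S \<subseteq> C"
  using assms unfolding Gamma_def by blast

lemma join_in_Gamma:
  assumes "S \<in> U"
  shows "join S \<in> Gamma U S"
  using assms unfolding Gamma_def U_ideal_def by blast

lemma subset_plus:
  assumes "\<forall>S\<in>U. has_join S"
  shows "U \<subseteq> plus U"
  using assms join_in_Gamma unfolding plus_def by blast

lemma U_ideal_antimono:
  assumes "U \<subseteq> V" and "U_ideal V C"
  shows "U_ideal U C"
  using assms unfolding U_ideal_def by blast

lemma Gamma_mono:
  assumes "U \<subseteq> V"
  shows "Gamma U S \<subseteq> Gamma V S"
  using U_ideal_antimono[OF assms] unfolding Gamma_def by blast

lemma plus_mono:
  assumes "U \<subseteq> V"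
  shows "plus U \<subseteq> plus V"
  using Gamma_mono[OF assms] unfolding plus_def by blast

lemma U_ideal_plus_iff:
  assumes "\<forall>S\<in>U. has_join S"
  shows "U_ideal (plus U) C \<longleftrightarrow> U_ideal U C"
proof
  assume "U_ideal (plus U) C"
  then show "U_ideal U C" using U_ideal_antimono subset_plus[OF assms] by blast
next
  assume C: "U_ideal U C"
  have "join S \<in> C" if "S \<in> plus U" and "S \<subseteq> C" for S
    using that Gamma_least[OF C] unfolding plus_def by blast
  with C show "U_ideal (plus U) C" unfolding U_ideal_def by blast
qed

lemma Gamma_plus:
  assumes "\<forall>S\<in>U. has_join S"
  shows "Gamma (plus U) = Gamma U"
  unfolding Gamma_def[abs_def] U_ideal_plus_iff[OF assms] ..

lemma plus_idem:
  assumes "\<forall>S\<in>U. has_join S"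
  shows "plus (plus U) = plus U"
  unfolding plus_def[of "plus U"] Gamma_plus[OF assms] unfolding plus_def ..

lemma join_spec_plus:
  assumes "join_spec U"
  shows "join_spec (plus U)"
  using assms subset_plus unfolding join_spec_def plus_def by blast

lemma frame_generating_plus:
  assumes "\<forall>S\<in>U. has_join S" and "frame_generating U"
  shows "frame_generating (plus U)"
  using assms(2) unfolding frame_generating_def Gamma_plus[OF assms(1)] U_ideal_plus_iff[OF assms(1)] .

lemma plus_in_JF_plus:
  assumes "U \<in> JF"
  shows "plus U \<in> JF_plus"
proof -
  have js: "join_spec U" and fg: "frame_generating U"
    using assms unfolding JF_def by auto
  then have joins: "\<forall>S\<in>U. has_join S" unfolding join_spec_def by blast
  show ?thesis
    unfolding JF_plus_def JF_def maximal_spec_def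
    using join_spec_plus[OF js] frame_generating_plus[OF joins fg] plus_idem[OF joins] by simp
qed

lemma plus_eq_self_if_JF_plus:
  assumes "V \<in> JF_plus"
  shows "plus V = V"
  using assms unfolding JF_plus_def maximal_spec_def by simp

theorem corollary5p6:
  shows "(\<forall>U\<in>(JF :: 'a::order set set set). plus U \<in> JF_plus)
    \<and> (\<forall>U\<in>(JF :: 'a::order set set set). \<forall>V\<in>JF. U \<subseteq> V \<longrightarrow> plus U \<subseteq> plus V)
    \<and> (\<forall>U\<in>(JF :: 'a::order set set set). \<forall>V\<in>JF_plus. plus U \<subseteq> V \<longleftrightarrow> U \<subseteq> V)"
proof (intro conjI ballI impI)
  fix U :: "'a set set" assume "U \<in> JF"
  then show "plus U \<in> JF_plus" by (rule plus_in_JF_plus)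
next
  fix U V :: "'a set set" assume "U \<subseteq> V"
  then show "plus U \<subseteq> plus V" by (rule plus_mono)
next
  fix U V :: "'a set set" assume U: "U \<in> JF" and V: "V \<in> JF_plus"
  have "U \<subseteq> plus U"
    using U subset_plus unfolding JF_def join_spec_def by blast
  then show "plus U \<subseteq> V \<longleftrightarrow> U \<subseteq> V"
    using plus_mono[of U V] plus_eq_self_if_JF_plus[OF V] by blast
qed

end
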